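(* Let $\beta\in[0,1]$ and let $f\in C^{3+\beta}$ with $f'>0$ on $[A,B]$. Then there is a constant $C$ depending only on $f$ (and $[A,B]$) such that for all $x_1,x_2,x_3\in[A,B]$, $$ {\rm D}(x_1,x_2,x_3;f)=1+(x_1-x_3)\left(\frac{f''(x_1)}{2f'(x_1)}+\frac{1}{6}Sf(x_1)(x_2+x_3-2x_1)+R\right),\qquad |R|\le C\Delta^{1+\beta}, $$ where $\Delta=\max\{x_1,x_2,x_3\}-\min\{x_1,x_2,x_3\}$.
   Context: The ratio distortion of three points with respect to a strictly increasing function $f$ is ${\rm D}(x_1,x_2,x_3;f)=\frac{f(x_1)-f(x_2)}{x_1-x_2}:\frac{f(x_2)-f(x_3)}{x_2-x_3}$; for smooth $f$ with $f'\neq0$ it is defined for non-distinct points by replacing any ratio $(f(a)-f(a))/(a-a)$ with $f'(a)$ (equivalently, by continuity). The Schwarzian derivative is $Sf=\frac{f'''}{f'}-\frac{3}{2}\left(\frac{f''}{f'}\right)^2$. $C^{3+\beta}$ means three times differentiable with $\beta$-Hölder third derivative ($\beta=0$: continuous third derivative). *)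

theory Defs
  imports "HOL-Analysis.Analysis"
begin

definition C3_holder :: "real \<Rightarrow> real \<Rightarrow> real \<Rightarrow> (real \<Rightarrow> real) \<Rightarrow> (real \<Rightarrow> real)
    \<Rightarrow> (real \<Rightarrow> real) \<Rightarrow> (real \<Rightarrow> real) \<Rightarrow> bool" where
  "C3_holder \<beta> A B f f1 f2 f3 \<longleftrightarrow>
     (\<forall>x\<in>{A..B}. (f has_real_derivative f1 x) (at x within {A..B})
                \<and> (f1 has_real_derivative f2 x) (at x within {A..B})
                \<and> (f2 has_real_derivative f3 x) (at x within {A..B}))
     \<and> continuous_on {A..B} f3
     \<and> (\<beta> > 0 \<longrightarrow> (\<exists>K. \<forall>x\<in>{A..B}. \<forall>y\<in>{A..B}. \<bar>f3 x - f3 y\<bar> \<le> K * \<bar>x - y\<bar> powr \<beta>))"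

definition diffquot :: "(real \<Rightarrow> real) \<Rightarrow> (real \<Rightarrow> real) \<Rightarrow> real \<Rightarrow> real \<Rightarrow> real" where
  "diffquot f f1 a b = (if a = b then f1 a else (f a - f b) / (a - b))"

definition ratio_distortion :: "(real \<Rightarrow> real) \<Rightarrow> (real \<Rightarrow> real) \<Rightarrow> real \<Rightarrow> real \<Rightarrow> real \<Rightarrow> real" where
  "ratio_distortion f f1 x1 x2 x3 = diffquot f f1 x1 x2 / diffquot f f1 x2 x3"

definition schwarzian :: "(real \<Rightarrow> real) \<Rightarrow> (real \<Rightarrow> real) \<Rightarrow> (real \<Rightarrow> real) \<Rightarrow> real \<Rightarrow> real" where
  "schwarzian f1 f2 f3 x = f3 x / f1 x - 3/2 * (f2 x / f1 x)^2"

end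

theory Submission
  imports Defs
begin

(*
  Expand f around x1 as its cubic Taylor polynomial plus a remainder g.  The divided
  differences [u,v] of the cubic are explicit polynomials in x2 - x1 and x3 - x1.  On
  the hull of the three points the third derivative of g is at most K * Delta^beta by
  the Hoelder condition, so mean value arguments give |[u,v]g| <= K * Delta^(2+beta) and
  |[x1,x2]g - [x2,x3]g| <= K * Delta^(1+beta) * |x1 - x3|.  Dividing the two expanded
  divided differences, the second order term becomes the Schwarzian, and all other
  terms are O(Delta^(1+beta)) with constants depending only on min f', max |f''|,
  max |f'''|, the Hoelder constant and B - A.
*)

lemma diffquot_commute: "diffquot f f' u v = diffquot f f' v u"
  unfolding diffquot_def by (auto simp: field_simps)

lemma diffquot_mean_value:
  fixes f f' :: "real \<Rightarrow> real"
  assumes "convex I" and deriv: "\<And>x. x \<in> I \<Longrightarrow> (f has_real_derivative f' x) (at x within I)"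
    and "u \<in> I" "v \<in> I"
  shows "\<exists>\<xi>\<in>I. diffquot f f' u v = f' \<xi>"
proof -
  have "\<exists>\<xi>\<in>I. diffquot f f' u v = f' \<xi>" if "u \<le> v" "u \<in> I" "v \<in> I" for u v
  proof -
    have uv: "{u..v} \<subseteq> I"
      using \<open>convex I\<close> that by (metis closed_segment_eq_real_ivl1 convex_contains_segment)
    have der: "(f has_derivative (*) (f' x)) (at x within {u..v})" if "u \<le> x" "x \<le> v" for x
      using that uv by (intro has_field_derivative_imp_has_derivative has_field_derivative_subset[OF deriv]) auto
    obtain \<xi> where "\<xi> \<in> {u..v}" "f v - f u = f' \<xi> * (v - u)"
      using mvt_very_simple[OF \<open>u \<le> v\<close> der] by blast
    then show ?thesis
      using uv by (intro bexI[of _ \<xi>]) (auto simp: diffquot_def field_simps)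
  qed
  then show ?thesis
    using assms(3,4) diffquot_commute by (metis linear)
qed

lemma abs_diffquot_le:
  fixes f f' :: "real \<Rightarrow> real"
  assumes "convex I" "\<And>x. x \<in> I \<Longrightarrow> (f has_real_derivative f' x) (at x within I)"
    and "\<And>x. x \<in> I \<Longrightarrow> \<bar>f' x\<bar> \<le> M" and "u \<in> I" "v \<in> I"
  shows "\<bar>diffquot f f' u v\<bar> \<le> M"
  using diffquot_mean_value[OF assms(1,2,4,5)] assms(3) by force

lemma abs_le_of_root_and_deriv_bound:
  fixes h h' :: "real \<Rightarrow> real"
  assumes "\<And>y. y \<in> {lo..hi} \<Longrightarrow> (h has_real_derivative h' y) (at y within {lo..hi})"
    and "\<And>y. y \<in> {lo..hi} \<Longrightarrow> \<bar>h' y\<bar> \<le> M" and "c \<in> {lo..hi}" "h c = 0" "y \<in> {lo..hi}"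
  shows "\<bar>h y\<bar> \<le> M * (hi - lo)"
proof -
  have "\<bar>h y - h c\<bar> \<le> M * \<bar>y - c\<bar>"
    using assms by (intro field_differentiable_bound[of "{lo..hi}", simplified]) auto
  also have "\<dots> \<le> M * (hi - lo)"
    using assms by (intro mult_left_mono) force+
  finally show ?thesis
    using \<open>h c = 0\<close> by simp
qed

lemma abs_diffquot_sub_deriv_le:
  fixes g g' g'' :: "real \<Rightarrow> real"
  assumes "convex I"
    and g': "\<And>x. x \<in> I \<Longrightarrow> (g has_real_derivative g' x) (at x within I)"
    and g'': "\<And>x. x \<in> I \<Longrightarrow> (g' has_real_derivative g'' x) (at x within I)"
    and bound: "\<And>x. x \<in> I \<Longrightarrow> \<bar>g'' x\<bar> \<le> M" and "u \<in> I" "v \<in> I"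
  shows "\<bar>diffquot g g' u v - g' v\<bar> \<le> M * \<bar>u - v\<bar>"
proof (cases "u = v")
  case False
  let ?J = "closed_segment v u"
  have J: "?J \<subseteq> I"
    using assms(1,5,6) by (simp add: convex_contains_segment)
  have "\<bar>g' w - g' v\<bar> \<le> M * \<bar>u - v\<bar>" if "w \<in> ?J" for w
  proof -
    have "\<bar>g' w - g' v\<bar> \<le> M * \<bar>w - v\<bar>"
      using assms(1) g'' bound \<open>v \<in> I\<close> J that
      by (intro field_differentiable_bound[of I, simplified]) auto
    also have "\<dots> \<le> M * \<bar>u - v\<bar>"
      using that bound[OF \<open>v \<in> I\<close>] by (intro mult_left_mono) (auto simp: closed_segment_eq_real_ivl split: if_splits)
    finally show ?thesis .
  qed
  moreover have "((\<lambda>w. g w - g' v * w) has_real_derivative g' w - g' v) (at w within ?J)"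
    if "w \<in> ?J" for w
    using g' J that by (auto intro!: derivative_eq_intros intro: has_field_derivative_subset)
  ultimately have "\<bar>(g u - g' v * u) - (g v - g' v * v)\<bar> \<le> M * \<bar>u - v\<bar> * \<bar>u - v\<bar>"
    by (intro field_differentiable_bound[of ?J, simplified]) auto
  then show ?thesis
    using False by (simp add: diffquot_def abs_le_iff divide_simps algebra_simps)
qed (simp add: diffquot_def)

lemma abs_diffquot_second_difference_le:
  fixes g g' g'' :: "real \<Rightarrow> real"
  assumes I: "convex I"
    and g': "\<And>x. x \<in> I \<Longrightarrow> (g has_real_derivative g' x) (at x within I)"
    and g'': "\<And>x. x \<in> I \<Longrightarrow> (g' has_real_derivative g'' x) (at x within I)"
    and bound: "\<And>x. x \<in> I \<Longrightarrow> \<bar>g'' x\<bar> \<le> M" and x: "x1 \<in> I" "x2 \<in> I" "x3 \<in> I"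
  shows "\<bar>diffquot g g' x1 x2 - diffquot g g' x2 x3\<bar> \<le> M * \<bar>x1 - x3\<bar>"
proof (cases "x2 \<in> closed_segment x1 x3")
  case True
  note taylor = abs_diffquot_sub_deriv_le[OF I g' g'' bound]
  have "\<bar>diffquot g g' x1 x2 - diffquot g g' x2 x3\<bar> \<le> M * \<bar>x1 - x2\<bar> + M * \<bar>x3 - x2\<bar>"
    using taylor[of x1 x2] taylor[of x3 x2] x diffquot_commute[of g g' x2 x3] by linarith
  also have "\<dots> = M * \<bar>x1 - x3\<bar>"
    using True by (auto simp: closed_segment_eq_real_ivl algebra_simps split: if_splits)
  finally show ?thesis .
next
  case False
  \<comment> \<open>\<open>x2\<close> lies outside the segment, where \<open>y \<mapsto> [y, x2]g\<close> is differentiable; the first-order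
      Taylor estimate bounds its derivative by \<open>M\<close>\<close>
  let ?J = "closed_segment x1 x3"
  define \<psi> where "\<psi> y = (g y - g x2) / (y - x2)" for y
  have J: "?J \<subseteq> I"
    using I x by (simp add: convex_contains_segment)
  have \<psi>_eq: "\<psi> y = diffquot g g' y x2" if "y \<in> ?J" for y
    using False that by (auto simp: \<psi>_def diffquot_def)
  have "(\<psi> has_real_derivative (g' y - \<psi> y) / (y - x2)) (at y within ?J)" if "y \<in> ?J" for y
  proof -
    have "y \<noteq> x2" using False that by auto
    then show ?thesis
      unfolding \<psi>_def using has_field_derivative_subset[OF g'] J that
      by (auto intro!: derivative_eq_intros simp: field_simps power2_eq_square)
  qed
  moreover have "\<bar>(g' y - \<psi> y) / (y - x2)\<bar> \<le> M" if "y \<in> ?J" for y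
  proof -
    have "\<bar>diffquot g g' x2 y - g' y\<bar> \<le> M * \<bar>x2 - y\<bar>"
      using J that x by (intro abs_diffquot_sub_deriv_le[OF I g' g'' bound]) auto
    then show ?thesis
      using \<psi>_eq[OF that] diffquot_commute[of g g' x2 y] False that
      by (auto simp: abs_divide abs_minus_commute divide_le_eq)
  qed
  ultimately have "\<bar>\<psi> x1 - \<psi> x3\<bar> \<le> M * \<bar>x1 - x3\<bar>"
    by (intro field_differentiable_bound[of ?J, simplified]) auto
  then show ?thesis
    using \<psi>_eq[of x1] \<psi>_eq[of x3] diffquot_commute[of g g' x2 x3] by simp
qed

lemma diffquot_cubic_split:
  fixes f f' :: "real \<Rightarrow> real" and c F0 F1 F2 F3 :: real
  defines "g \<equiv> \<lambda>y. f y - (F0 + F1*(y-c) + F2*(y-c)^2/2 + F3*(y-c)^3/6)"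
    and "g' \<equiv> \<lambda>y. f' y - F1 - F2*(y-c) - F3*(y-c)^2/2"
  shows "diffquot f f' u v = F1 + F2/2*((u-c)+(v-c)) + F3/6*((u-c)^2+(u-c)*(v-c)+(v-c)^2)
                             + diffquot g g' u v"
proof (cases "u = v")
  case False
  have "g u - g v = (f u - f v)
          - (u - v) * (F1 + F2/2*((u-c)+(v-c)) + F3/6*((u-c)^2+(u-c)*(v-c)+(v-c)^2))"
    unfolding g_def by (simp add: field_simps power2_eq_square power3_eq_cube)
  with False show ?thesis
    by (simp add: diffquot_def diff_divide_distrib)
qed (simp add: diffquot_def g'_def field_simps power2_eq_square)

lemma ratio_distortion_eq_expansion:
  fixes f f1 :: "real \<Rightarrow> real" and x1 x2 x3 a b F1 F2 F3 \<sigma> E12 E23 Q23 R :: real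
  assumes a_def: "a = x2 - x1" and b_def: "b = x3 - x1" and Q23_def: "Q23 = diffquot f f1 x2 x3"
    and R_def: "R = ((E23 - E12)/b - F2*\<sigma>*(a+b)^2/12
                     - (F2/(2*F1) + \<sigma>/6*(a+b))*(F3/6*(a^2+a*b+b^2) + E23)) / Q23"
    and Q12: "diffquot f f1 x1 x2 = F1 + F2/2*a + F3/6*a^2 + E12"
    and Q23: "Q23 = F1 + F2/2*(a+b) + F3/6*(a^2+a*b+b^2) + E23"
    and \<sigma>: "\<sigma> = F3/F1 - 3/2*(F2/F1)^2" and "F1 \<noteq> 0" "Q23 \<noteq> 0"
  shows "ratio_distortion f f1 x1 x2 x3 = 1 + (x1 - x3) * (F2/(2*F1) + 1/6*\<sigma>*(x2 + x3 - 2*x1) + R)"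
proof (cases "x1 = x3")
  case True
  then show ?thesis
    using \<open>Q23 \<noteq> 0\<close> by (simp add: ratio_distortion_def Q23_def diffquot_commute)
next
  case False
  then have "b \<noteq> 0"
    by (simp add: b_def)
  define \<mu> where "\<mu> = F2/(2*F1) + \<sigma>/6*(a+b)"
  have Q12_Q23: "diffquot f f1 x1 x2 = Q23 - b*(F2/2 + F3/6*(a+b)) + (E12 - E23)"
    unfolding Q12 Q23 by (simp add: field_simps power2_eq_square)
  have \<mu>: "F2/2 + F3/6*(a+b) = \<mu>*(Q23 - (F3/6*(a^2+a*b+b^2) + E23)) - F2*\<sigma>*(a+b)^2/12"
    unfolding \<mu>_def \<sigma> Q23 using \<open>F1 \<noteq> 0\<close>
    by (simp add: field_simps power2_eq_square)
  have "ratio_distortion f f1 x1 x2 x3 = 1 - b * (((F2/2 + F3/6*(a+b)) + (E23 - E12)/b) / Q23)"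
    unfolding ratio_distortion_def Q23_def[symmetric] Q12_Q23
    using \<open>Q23 \<noteq> 0\<close> \<open>b \<noteq> 0\<close> by (simp add: field_simps)
  also have "\<dots> = 1 - b * (\<mu> + R)"
  proof -
    have "(\<mu>*(Q23 - \<rho>) - X + Y) / Q23 = \<mu> + (Y - X - \<mu>*\<rho>) / Q23" for \<rho> X Y
      using \<open>Q23 \<noteq> 0\<close> by (simp add: field_simps)
    from this[of "F3/6*(a^2+a*b+b^2) + E23" "F2*\<sigma>*(a+b)^2/12" "(E23 - E12)/b"]
    show ?thesis
      unfolding \<mu> R_def \<mu>_def[symmetric] by simp
  qed
  also have "\<dots> = 1 + (x1 - x3) * (F2/(2*F1) + 1/6*\<sigma>*(x2 + x3 - 2*x1) + R)"
  proof -
    have "F2/(2*F1) + 1/6*\<sigma>*(x2 + x3 - 2*x1) = \<mu>"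
      by (simp add: \<mu>_def a_def b_def algebra_simps)
    then show ?thesis
      by (simp add: b_def algebra_simps)
  qed
  finally show ?thesis .
qed

lemma abs_quadratic_form_le:
  fixes a b \<Delta> :: real
  assumes "\<bar>a\<bar> \<le> \<Delta>" "\<bar>b\<bar> \<le> \<Delta>"
  shows "\<bar>a^2 + a*b + b^2\<bar> \<le> 3*\<Delta>^2"
proof -
  have "\<bar>a^2 + a*b + b^2\<bar> \<le> \<bar>a\<bar>^2 + \<bar>a\<bar>*\<bar>b\<bar> + \<bar>b\<bar>^2"
    using abs_triangle_ineq[of "a^2 + a*b" "b^2"] abs_triangle_ineq[of "a^2" "a*b"]
    by (simp add: abs_mult power_abs)
  also have "\<dots> \<le> \<Delta>^2 + \<Delta>*\<Delta> + \<Delta>^2"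
    using assms by (intro add_mono mult_mono power_mono) auto
  finally show ?thesis
    by (simp add: power2_eq_square)
qed

lemma abs_expansion_remainder_le:
  fixes F1 F2 F3 \<sigma> a b E12 E23 Q23 m M2 M3 \<Sigma> \<Delta> P :: real
  defines "\<mu> \<equiv> F2/(2*F1) + \<sigma>/6*(a+b)"
  assumes "0 < m" "m \<le> F1" "m \<le> Q23" and "\<bar>F2\<bar> \<le> M2" "\<bar>F3\<bar> \<le> M3" "\<bar>\<sigma>\<bar> \<le> \<Sigma>"
    and "\<bar>a\<bar> \<le> \<Delta>" "\<bar>b\<bar> \<le> \<Delta>" and "0 \<le> P"
    and "\<bar>E23 - E12\<bar> \<le> P*\<Delta>*\<bar>b\<bar>" "\<bar>E23\<bar> \<le> P*\<Delta>^2"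
  shows "\<bar>((E23 - E12)/b - F2*\<sigma>*(a+b)^2/12 - \<mu>*(F3/6*(a^2+a*b+b^2) + E23)) / Q23\<bar>
           \<le> (P*\<Delta> + (M2*\<Sigma>/3 + (M2/(2*m) + \<Sigma>*\<Delta>/3)*(M3/2 + P))*\<Delta>^2) / m"
proof -
  have "0 \<le> \<Delta>" "0 \<le> M2" "0 \<le> M3" "0 \<le> \<Sigma>"
    using assms(5-9) by linarith+
  have s: "(a+b)^2 \<le> 4*\<Delta>^2"
    using power_mono[of "\<bar>a+b\<bar>" "2*\<Delta>" 2] assms(8,9) by simp
  have e: "\<bar>(E23 - E12)/b\<bar> \<le> P*\<Delta>"
    using assms(10,11) \<open>0 \<le> \<Delta>\<close> by (cases "b = 0") (auto simp: abs_divide divide_le_eq)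
  have t: "\<bar>F2*\<sigma>*(a+b)^2/12\<bar> \<le> M2*\<Sigma>/3*\<Delta>^2"
  proof -
    have "\<bar>F2*\<sigma>*(a+b)^2\<bar> \<le> M2*\<Sigma>*(4*\<Delta>^2)"
      unfolding abs_mult using assms(5,7) s \<open>0 \<le> M2\<close> by (intro mult_mono) auto
    then show ?thesis by simp
  qed
  have \<mu>: "\<bar>\<mu>\<bar> \<le> M2/(2*m) + \<Sigma>*\<Delta>/3"
  proof -
    have "\<bar>F2\<bar>/(2*F1) \<le> M2/(2*m)"
      using assms(2,3,5) \<open>0 \<le> M2\<close> by (intro frac_le) auto
    then have "\<bar>F2/(2*F1)\<bar> \<le> M2/(2*m)"
      using assms(2,3) by (simp add: abs_divide)
    moreover have "\<bar>\<sigma>\<bar> * \<bar>a+b\<bar> \<le> \<Sigma> * (2*\<Delta>)"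
      using assms(7-9) \<open>0 \<le> \<Sigma>\<close> by (intro mult_mono) auto
    then have "\<bar>\<sigma>/6*(a+b)\<bar> \<le> \<Sigma>*\<Delta>/3"
      by (simp add: abs_mult)
    ultimately show ?thesis
      unfolding \<mu>_def by linarith
  qed
  have \<rho>: "\<bar>F3/6*(a^2+a*b+b^2) + E23\<bar> \<le> (M3/2 + P)*\<Delta>^2"
  proof -
    have "\<bar>F3\<bar> * \<bar>a^2+a*b+b^2\<bar> \<le> M3 * (3*\<Delta>^2)"
      using assms(6) abs_quadratic_form_le[OF assms(8,9)] \<open>0 \<le> M3\<close> by (intro mult_mono) auto
    then have "\<bar>F3/6*(a^2+a*b+b^2)\<bar> \<le> M3/2*\<Delta>^2"
      by (simp add: abs_mult)
    then show ?thesis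
      using assms(12) abs_triangle_ineq[of "F3/6*(a^2+a*b+b^2)" E23] by (simp add: distrib_right)
  qed
  have "\<bar>\<mu>*(F3/6*(a^2+a*b+b^2) + E23)\<bar> \<le> (M2/(2*m) + \<Sigma>*\<Delta>/3)*((M3/2 + P)*\<Delta>^2)"
    unfolding abs_mult using \<mu> by (intro mult_mono \<rho>) auto
  moreover have "(P*\<Delta> + (M2*\<Sigma>/3 + (M2/(2*m) + \<Sigma>*\<Delta>/3)*(M3/2 + P))*\<Delta>^2)
      = P*\<Delta> + M2*\<Sigma>/3*\<Delta>^2 + (M2/(2*m) + \<Sigma>*\<Delta>/3)*((M3/2 + P)*\<Delta>^2)"
    by (simp only: distrib_right mult.assoc add.assoc)
  ultimately have "\<bar>(E23 - E12)/b - F2*\<sigma>*(a+b)^2/12 - \<mu>*(F3/6*(a^2+a*b+b^2) + E23)\<bar>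
               \<le> P*\<Delta> + (M2*\<Sigma>/3 + (M2/(2*m) + \<Sigma>*\<Delta>/3)*(M3/2 + P))*\<Delta>^2"
    using e t abs_triangle_ineq4[of "(E23 - E12)/b - F2*\<sigma>*(a+b)^2/12"] abs_triangle_ineq4[of "(E23 - E12)/b"]
    by linarith
  then have "\<bar>(E23 - E12)/b - F2*\<sigma>*(a+b)^2/12 - \<mu>*(F3/6*(a^2+a*b+b^2) + E23)\<bar> / Q23
               \<le> (P*\<Delta> + (M2*\<Sigma>/3 + (M2/(2*m) + \<Sigma>*\<Delta>/3)*(M3/2 + P))*\<Delta>^2) / m"
    using assms(2,4) by (intro frac_le) auto
  then show ?thesis
    using assms(2,4) by (simp add: abs_divide)
qed

lemma abs_schwarzian_le:
  assumes "0 < m" "m \<le> f1 x" "\<bar>f2 x\<bar> \<le> M2" "\<bar>f3 x\<bar> \<le> M3"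
  shows "\<bar>schwarzian f1 f2 f3 x\<bar> \<le> M3/m + 3/2*(M2/m)^2"
proof -
  have "\<bar>f3 x\<bar> / f1 x \<le> M3/m" "\<bar>f2 x\<bar> / f1 x \<le> M2/m"
    using assms by (auto intro!: frac_le)
  moreover have "0 < f1 x"
    using assms by linarith
  ultimately have "\<bar>f3 x / f1 x\<bar> \<le> M3/m" "\<bar>f2 x / f1 x\<bar> \<le> M2/m"
    by (simp_all add: abs_divide)
  moreover from this(2) have "(f2 x / f1 x)^2 \<le> (M2/m)^2"
    using power_mono[of "\<bar>f2 x / f1 x\<bar>" "M2/m" 2] unfolding power2_abs by simp
  ultimately show ?thesis
    unfolding schwarzian_def using zero_le_power2[of "f2 x / f1 x"] by linarith
qed

lemma powr_le_bounds:
  fixes \<Delta> W \<beta> :: real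
  assumes "0 \<le> \<Delta>" "\<Delta> \<le> W" "1 \<le> W" "0 \<le> \<beta>" "\<beta> \<le> 1"
  shows "\<Delta> powr \<beta> \<le> W" and "\<Delta>^2 \<le> W * \<Delta> powr (1 + \<beta>)"
proof -
  have le_W: "\<Delta> powr \<gamma> \<le> W" if "0 \<le> \<gamma>" "\<gamma> \<le> 1" for \<gamma>
  proof (cases "\<Delta> = 0")
    case False
    have "\<Delta> powr \<gamma> \<le> W powr \<gamma>"
      using assms that by (intro powr_mono2) auto
    also have "\<dots> \<le> W powr 1"
      using assms that by (intro powr_mono) auto
    finally show ?thesis using assms by simp
  qed (use assms in simp)
  then show "\<Delta> powr \<beta> \<le> W"
    using assms by simp
  show "\<Delta>^2 \<le> W * \<Delta> powr (1 + \<beta>)"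
  proof (cases "\<Delta> = 0")
    case False
    have "\<Delta> powr (1 + \<beta>) * \<Delta> powr (1 - \<beta>) = \<Delta> powr ((1 + \<beta>) + (1 - \<beta>))"
      by (rule powr_add[symmetric])
    also have "\<dots> = \<Delta>^2"
      using assms False by simp
    finally have "\<Delta>^2 = \<Delta> powr (1 + \<beta>) * \<Delta> powr (1 - \<beta>)" ..
    also have "\<dots> \<le> \<Delta> powr (1 + \<beta>) * W"
      using le_W assms by (intro mult_left_mono) auto
    finally show ?thesis by (simp add: mult.commute)
  qed simp
qed

locale C3_holder_bounds =
  fixes A B \<beta> :: real and f f1 f2 f3 :: "real \<Rightarrow> real" and m M2 M3 K :: real
  assumes f1: "\<And>x. x \<in> {A..B} \<Longrightarrow> (f has_real_derivative f1 x) (at x within {A..B})"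
    and f2: "\<And>x. x \<in> {A..B} \<Longrightarrow> (f1 has_real_derivative f2 x) (at x within {A..B})"
    and f3: "\<And>x. x \<in> {A..B} \<Longrightarrow> (f2 has_real_derivative f3 x) (at x within {A..B})"
    and m_pos: "0 < m" and f1_ge: "\<And>x. x \<in> {A..B} \<Longrightarrow> m \<le> f1 x"
    and f2_bound: "\<And>x. x \<in> {A..B} \<Longrightarrow> \<bar>f2 x\<bar> \<le> M2"
    and f3_bound: "\<And>x. x \<in> {A..B} \<Longrightarrow> \<bar>f3 x\<bar> \<le> M3"
    and f3_holder: "\<And>x y. x \<in> {A..B} \<Longrightarrow> y \<in> {A..B} \<Longrightarrow> \<bar>f3 x - f3 y\<bar> \<le> K * \<bar>x - y\<bar> powr \<beta>"
    and K_nonneg: "0 \<le> K" and \<beta>: "0 \<le> \<beta>" "\<beta> \<le> 1"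
begin

lemma diffquot_ge: "u \<in> {A..B} \<Longrightarrow> v \<in> {A..B} \<Longrightarrow> m \<le> diffquot f f1 u v"
  using diffquot_mean_value[of "{A..B}" f f1 u v] f1 f1_ge by fastforce

lemma cubic_remainder_diffquot_bounds:
  assumes I: "{lo..hi} \<subseteq> {A..B}" and c: "c \<in> {lo..hi}"
  defines "g \<equiv> \<lambda>y. f y - (f c + f1 c*(y-c) + f2 c*(y-c)^2/2 + f3 c*(y-c)^3/6)"
    and "g' \<equiv> \<lambda>y. f1 y - f1 c - f2 c*(y-c) - f3 c*(y-c)^2/2"
    and "P \<equiv> K * (hi - lo) powr \<beta>"
  shows "\<And>u v. u \<in> {lo..hi} \<Longrightarrow> v \<in> {lo..hi} \<Longrightarrow> \<bar>diffquot g g' u v\<bar> \<le> P * (hi - lo)^2"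
    and "\<And>u v w. u \<in> {lo..hi} \<Longrightarrow> v \<in> {lo..hi} \<Longrightarrow> w \<in> {lo..hi} \<Longrightarrow>
           \<bar>diffquot g g' u v - diffquot g g' v w\<bar> \<le> P * (hi - lo) * \<bar>u - w\<bar>"
proof -
  define g'' where "g'' y = f2 y - f2 c - f3 c*(y-c)" for y
  define g''' where "g''' y = f3 y - f3 c" for y
  have near: "\<bar>y - c\<bar> \<le> hi - lo" if "y \<in> {lo..hi}" for y
    using that c by auto
  have restrict: "(h has_real_derivative h' y) (at y within {lo..hi})"
    if "(h has_real_derivative h' y) (at y within {A..B})" for h h' y
    using has_field_derivative_subset[OF that I] .
  have dg: "(g has_real_derivative g' y) (at y within {lo..hi})" if "y \<in> {lo..hi}" for y
    unfolding g_def g'_def using that I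
    by (intro restrict) (auto intro!: derivative_eq_intros f1 simp: field_simps power2_eq_square)
  have dg': "(g' has_real_derivative g'' y) (at y within {lo..hi})" if "y \<in> {lo..hi}" for y
    unfolding g'_def g''_def using that I
    by (intro restrict) (auto intro!: derivative_eq_intros f2 simp: field_simps power2_eq_square)
  have dg'': "(g'' has_real_derivative g''' y) (at y within {lo..hi})" if "y \<in> {lo..hi}" for y
    unfolding g''_def g'''_def using that I
    by (intro restrict) (auto intro!: derivative_eq_intros f3)
  have "\<bar>g''' y\<bar> \<le> P" if "y \<in> {lo..hi}" for y
  proof -
    have "\<bar>g''' y\<bar> \<le> K * \<bar>y - c\<bar> powr \<beta>"
      unfolding g'''_def using that c I by (intro f3_holder) auto
    also have "\<dots> \<le> P"
      unfolding P_def using K_nonneg \<beta> near[OF that] by (intro mult_left_mono powr_mono2) auto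
    finally show ?thesis .
  qed
  then have g''_bound: "\<bar>g'' y\<bar> \<le> P * (hi - lo)" if "y \<in> {lo..hi}" for y
    using abs_le_of_root_and_deriv_bound[OF dg'' _ c] that by (simp add: g''_def)
  have g'_bound: "\<bar>g' y\<bar> \<le> P * (hi - lo)^2" if "y \<in> {lo..hi}" for y
  proof -
    have "\<bar>g' y\<bar> \<le> P * (hi - lo) * (hi - lo)"
      by (rule abs_le_of_root_and_deriv_bound[OF dg' g''_bound c]) (use that in \<open>auto simp: g'_def\<close>)
    then show ?thesis
      by (simp add: power2_eq_square mult.assoc)
  qed
  show "\<bar>diffquot g g' u v\<bar> \<le> P * (hi - lo)^2" if "u \<in> {lo..hi}" "v \<in> {lo..hi}" for u v
    using abs_diffquot_le[OF _ dg g'_bound] that by simp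
  show "\<bar>diffquot g g' u v - diffquot g g' v w\<bar> \<le> P * (hi - lo) * \<bar>u - w\<bar>"
    if "u \<in> {lo..hi}" "v \<in> {lo..hi}" "w \<in> {lo..hi}" for u v w
    using abs_diffquot_second_difference_le[OF _ dg dg' g''_bound] that
    by simp
qed

lemma ratio_distortion_expansion_at:
  assumes x: "x1 \<in> {A..B}" "x2 \<in> {A..B}" "x3 \<in> {A..B}"
  defines "\<Delta> \<equiv> Max {x1, x2, x3} - Min {x1, x2, x3}"
    and "\<Sigma> \<equiv> M3/m + 3/2*(M2/m)^2"
  shows "\<exists>R. ratio_distortion f f1 x1 x2 x3
               = 1 + (x1 - x3) * (f2 x1 / (2 * f1 x1)
                   + 1/6 * schwarzian f1 f2 f3 x1 * (x2 + x3 - 2 * x1) + R)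
           \<and> \<bar>R\<bar> \<le> (K*\<Delta> powr \<beta>*\<Delta> + (M2*\<Sigma>/3 + (M2/(2*m) + \<Sigma>*\<Delta>/3)*(M3/2 + K*\<Delta> powr \<beta>))*\<Delta>^2) / m"
proof -
  define lo where "lo = Min {x1, x2, x3}"
  define hi where "hi = Max {x1, x2, x3}"
  have I: "{lo..hi} \<subseteq> {A..B}" and in_I: "x1 \<in> {lo..hi}" "x2 \<in> {lo..hi}" "x3 \<in> {lo..hi}"
    using x by (auto simp: lo_def hi_def)
  have \<Delta>: "\<Delta> = hi - lo"
    by (simp add: \<Delta>_def lo_def hi_def)
  define g where "g y = f y - (f x1 + f1 x1*(y-x1) + f2 x1*(y-x1)^2/2 + f3 x1*(y-x1)^3/6)" for y
  define g' where "g' y = f1 y - f1 x1 - f2 x1*(y-x1) - f3 x1*(y-x1)^2/2" for y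
  have split: "diffquot f f1 u v = f1 x1 + f2 x1/2*((u-x1)+(v-x1))
                 + f3 x1/6*((u-x1)^2+(u-x1)*(v-x1)+(v-x1)^2) + diffquot g g' u v" for u v
    unfolding g_def g'_def by (rule diffquot_cubic_split)
  have "m \<le> diffquot f f1 x2 x3"
    using diffquot_ge x by blast
  define R where "R = ((diffquot g g' x2 x3 - diffquot g g' x1 x2)/(x3 - x1)
      - f2 x1 * schwarzian f1 f2 f3 x1 * ((x2 - x1) + (x3 - x1))^2/12
      - (f2 x1/(2*f1 x1) + schwarzian f1 f2 f3 x1/6*((x2 - x1) + (x3 - x1)))
        * (f3 x1/6*((x2 - x1)^2 + (x2 - x1)*(x3 - x1) + (x3 - x1)^2) + diffquot g g' x2 x3))
      / diffquot f f1 x2 x3"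
  show ?thesis
  proof (intro exI[of _ R] conjI)
    show "ratio_distortion f f1 x1 x2 x3 = 1 + (x1 - x3) * (f2 x1 / (2 * f1 x1)
                   + 1/6 * schwarzian f1 f2 f3 x1 * (x2 + x3 - 2 * x1) + R)"
      using \<open>m \<le> diffquot f f1 x2 x3\<close> m_pos f1_ge[OF x(1)] split[of x1 x2] split[of x2 x3]
      by (intro ratio_distortion_eq_expansion[OF refl refl refl R_def]) (auto simp: schwarzian_def)
    show "\<bar>R\<bar> \<le> (K*\<Delta> powr \<beta>*\<Delta> + (M2*\<Sigma>/3 + (M2/(2*m) + \<Sigma>*\<Delta>/3)*(M3/2 + K*\<Delta> powr \<beta>))*\<Delta>^2) / m"
      unfolding R_def
    proof (rule abs_expansion_remainder_le[OF m_pos f1_ge[OF x(1)] \<open>m \<le> diffquot f f1 x2 x3\<close>])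
      show "\<bar>f2 x1\<bar> \<le> M2" "\<bar>f3 x1\<bar> \<le> M3"
        using x f2_bound f3_bound by auto
      show "\<bar>schwarzian f1 f2 f3 x1\<bar> \<le> \<Sigma>"
        unfolding \<Sigma>_def using x by (intro abs_schwarzian_le m_pos f1_ge f2_bound f3_bound)
      show "\<bar>x2 - x1\<bar> \<le> \<Delta>" "\<bar>x3 - x1\<bar> \<le> \<Delta>"
        using in_I by (auto simp: \<Delta>)
      show "0 \<le> K * \<Delta> powr \<beta>"
        using K_nonneg by simp
      show "\<bar>diffquot g g' x2 x3 - diffquot g g' x1 x2\<bar> \<le> K * \<Delta> powr \<beta> * \<Delta> * \<bar>x3 - x1\<bar>"
        using cubic_remainder_diffquot_bounds(2)[OF I in_I(1) in_I(1,2,3)]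
        by (simp add: g_def[abs_def] g'_def[abs_def] \<Delta> abs_minus_commute)
      show "\<bar>diffquot g g' x2 x3\<bar> \<le> K * \<Delta> powr \<beta> * \<Delta>^2"
        using cubic_remainder_diffquot_bounds(1)[OF I in_I(1) in_I(2,3)]
        by (simp add: g_def[abs_def] g'_def[abs_def] \<Delta>)
    qed
  qed
qed

lemma ratio_distortion_expansion:
  "\<exists>C. \<forall>x1\<in>{A..B}. \<forall>x2\<in>{A..B}. \<forall>x3\<in>{A..B}. \<exists>R.
     ratio_distortion f f1 x1 x2 x3
       = 1 + (x1 - x3) * (f2 x1 / (2 * f1 x1)
           + 1/6 * schwarzian f1 f2 f3 x1 * (x2 + x3 - 2 * x1) + R)
     \<and> \<bar>R\<bar> \<le> C * (Max {x1, x2, x3} - Min {x1, x2, x3}) powr (1 + \<beta>)"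
proof -
  define W where "W = max 1 (B - A)"
  define \<Sigma> where "\<Sigma> = M3/m + 3/2*(M2/m)^2"
  define C where "C = (K + (M2*\<Sigma>/3 + (M2/(2*m) + \<Sigma>*W/3)*(M3/2 + K*W))*W) / m"
  show ?thesis
  proof (rule exI[of _ C], intro ballI)
    fix x1 x2 x3 assume x: "x1 \<in> {A..B}" "x2 \<in> {A..B}" "x3 \<in> {A..B}"
    define \<Delta> where "\<Delta> = Max {x1, x2, x3} - Min {x1, x2, x3}"
    have "0 \<le> M2" "0 \<le> M3" "0 \<le> \<Sigma>"
      using f2_bound[OF x(1)] f3_bound[OF x(1)] m_pos by (auto simp: \<Sigma>_def)
    have "0 \<le> \<Delta>" "\<Delta> \<le> W" "1 \<le> W"
      using x by (auto simp: \<Delta>_def W_def)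
    note powr_bounds = powr_le_bounds[OF this \<beta>]
    obtain R where expansion: "ratio_distortion f f1 x1 x2 x3
        = 1 + (x1 - x3) * (f2 x1 / (2 * f1 x1) + 1/6 * schwarzian f1 f2 f3 x1 * (x2 + x3 - 2 * x1) + R)"
      and R: "\<bar>R\<bar> \<le> (K*\<Delta> powr \<beta>*\<Delta> + (M2*\<Sigma>/3 + (M2/(2*m) + \<Sigma>*\<Delta>/3)*(M3/2 + K*\<Delta> powr \<beta>))*\<Delta>^2) / m"
      using ratio_distortion_expansion_at[OF x] unfolding \<Delta>_def \<Sigma>_def by blast
    have "K*\<Delta> powr \<beta>*\<Delta> = K*\<Delta> powr (1 + \<beta>)"
      using \<open>0 \<le> \<Delta>\<close> by (simp add: powr_add)
    moreover have "(M2*\<Sigma>/3 + (M2/(2*m) + \<Sigma>*\<Delta>/3)*(M3/2 + K*\<Delta> powr \<beta>))*\<Delta>^2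
        \<le> (M2*\<Sigma>/3 + (M2/(2*m) + \<Sigma>*W/3)*(M3/2 + K*W)) * (W * \<Delta> powr (1 + \<beta>))"
    proof -
      have "M2/(2*m) + \<Sigma>*\<Delta>/3 \<le> M2/(2*m) + \<Sigma>*W/3" "M3/2 + K*\<Delta> powr \<beta> \<le> M3/2 + K*W"
        using \<open>0 \<le> \<Sigma>\<close> \<open>\<Delta> \<le> W\<close> powr_bounds(1) K_nonneg by (auto intro: mult_left_mono)
      moreover have "0 \<le> M2/(2*m) + \<Sigma>*\<Delta>/3" "0 \<le> M3/2 + K*\<Delta> powr \<beta>"
        using \<open>0 \<le> M2\<close> \<open>0 \<le> M3\<close> \<open>0 \<le> \<Sigma>\<close> \<open>0 \<le> \<Delta>\<close> K_nonneg m_pos by auto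
      ultimately have "(M2/(2*m) + \<Sigma>*\<Delta>/3)*(M3/2 + K*\<Delta> powr \<beta>) \<le> (M2/(2*m) + \<Sigma>*W/3)*(M3/2 + K*W)"
        by (intro mult_mono) auto
      moreover have "0 \<le> M2*\<Sigma>/3 + (M2/(2*m) + \<Sigma>*W/3)*(M3/2 + K*W)"
        using \<open>0 \<le> M2\<close> \<open>0 \<le> M3\<close> \<open>0 \<le> \<Sigma>\<close> \<open>1 \<le> W\<close> K_nonneg m_pos by auto
      ultimately show ?thesis
        using powr_bounds(2) by (intro mult_mono) auto
  qed
    ultimately have "\<bar>R\<bar> \<le> (K + (M2*\<Sigma>/3 + (M2/(2*m) + \<Sigma>*W/3)*(M3/2 + K*W))*W) * \<Delta> powr (1 + \<beta>) / m"
      using R m_pos by (auto simp: divide_right_mono algebra_simps intro: order.trans)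
    with expansion show "\<exists>R. ratio_distortion f f1 x1 x2 x3
         = 1 + (x1 - x3) * (f2 x1 / (2 * f1 x1) + 1/6 * schwarzian f1 f2 f3 x1 * (x2 + x3 - 2 * x1) + R)
       \<and> \<bar>R\<bar> \<le> C * (Max {x1, x2, x3} - Min {x1, x2, x3}) powr (1 + \<beta>)"
      unfolding C_def \<Delta>_def by auto
  qed
qed

end

lemma C3_holder_imp_holder_constant:
  assumes "0 \<le> \<beta>" and C3: "C3_holder \<beta> A B f f1 f2 f3"
  obtains K where "0 \<le> K"
    and "\<And>x y. x \<in> {A..B} \<Longrightarrow> y \<in> {A..B} \<Longrightarrow> \<bar>f3 x - f3 y\<bar> \<le> K * \<bar>x - y\<bar> powr \<beta>"
proof (cases "\<beta> > 0")
  case True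
  then obtain K where K: "\<forall>x\<in>{A..B}. \<forall>y\<in>{A..B}. \<bar>f3 x - f3 y\<bar> \<le> K * \<bar>x - y\<bar> powr \<beta>"
    using C3 unfolding C3_holder_def by blast
  show thesis
  proof (rule that[of "max 0 K"])
    fix x y assume "x \<in> {A..B}" "y \<in> {A..B}"
    then have "\<bar>f3 x - f3 y\<bar> \<le> K * \<bar>x - y\<bar> powr \<beta>"
      using K by blast
    also have "\<dots> \<le> max 0 K * \<bar>x - y\<bar> powr \<beta>"
      by (intro mult_right_mono) auto
    finally show "\<bar>f3 x - f3 y\<bar> \<le> max 0 K * \<bar>x - y\<bar> powr \<beta>" .
  qed simp
next
  case False
  then have "\<beta> = 0"
    using \<open>0 \<le> \<beta>\<close> by simp
  have "continuous_on {A..B} f3"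
    using C3 unfolding C3_holder_def by blast
  obtain M where "0 \<le> M" and M: "\<And>x. x \<in> {A..B} \<Longrightarrow> \<bar>f3 x\<bar> \<le> M"
    using continuous_on_compact_bound[OF compact_Icc \<open>continuous_on {A..B} f3\<close>]
    by (metis real_norm_def)
  \<comment> \<open>\<open>\<bar>x - y\<bar> powr 0\<close> is 1 for \<open>x \<noteq> y\<close> and 0 for \<open>x = y\<close>\<close>
  have "\<bar>f3 x - f3 y\<bar> \<le> 2 * M * \<bar>x - y\<bar> powr \<beta>" if "x \<in> {A..B}" "y \<in> {A..B}" for x y
    using M[OF that(1)] M[OF that(2)] \<open>\<beta> = 0\<close> by (cases "x = y") auto
  then show thesis
    using that[of "2 * M"] \<open>0 \<le> M\<close> by auto
qed

lemma C3_holder_imp_bounds: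
  assumes "0 \<le> \<beta>" "\<beta> \<le> 1" and C3: "C3_holder \<beta> A B f f1 f2 f3"
    and pos: "\<forall>x\<in>{A..B}. f1 x > 0"
  shows "\<exists>m M2 M3 K. C3_holder_bounds A B \<beta> f f1 f2 f3 m M2 M3 K"
proof -
  have d1: "\<And>x. x \<in> {A..B} \<Longrightarrow> (f has_real_derivative f1 x) (at x within {A..B})"
    and d2: "\<And>x. x \<in> {A..B} \<Longrightarrow> (f1 has_real_derivative f2 x) (at x within {A..B})"
    and d3: "\<And>x. x \<in> {A..B} \<Longrightarrow> (f2 has_real_derivative f3 x) (at x within {A..B})"
    and "continuous_on {A..B} f3"
    using C3 unfolding C3_holder_def by auto
  obtain M2 where M2: "\<And>x. x \<in> {A..B} \<Longrightarrow> \<bar>f2 x\<bar> \<le> M2"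
    using continuous_on_compact_bound[OF compact_Icc DERIV_continuous_on[OF d3]]
    by (metis real_norm_def)
  obtain M3 where M3: "\<And>x. x \<in> {A..B} \<Longrightarrow> \<bar>f3 x\<bar> \<le> M3"
    using continuous_on_compact_bound[OF compact_Icc \<open>continuous_on {A..B} f3\<close>]
    by (metis real_norm_def)
  obtain m where m: "0 < m" "\<And>x. x \<in> {A..B} \<Longrightarrow> m \<le> f1 x"
  proof (cases "A \<le> B")
    case True
    then obtain x0 where "x0 \<in> {A..B}" "\<forall>y\<in>{A..B}. f1 x0 \<le> f1 y"
      using continuous_attains_inf[OF compact_Icc _ DERIV_continuous_on[OF d2]] by auto
    then show thesis
      using pos by (intro that[of "f1 x0"]) auto
  qed (use that[of 1] in auto)
  obtain K where "0 \<le> K"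
    and "\<And>x y. x \<in> {A..B} \<Longrightarrow> y \<in> {A..B} \<Longrightarrow> \<bar>f3 x - f3 y\<bar> \<le> K * \<bar>x - y\<bar> powr \<beta>"
    using C3_holder_imp_holder_constant[OF \<open>0 \<le> \<beta>\<close> C3] by blast
  with d1 d2 d3 m M2 M3 assms(1,2) have "C3_holder_bounds A B \<beta> f f1 f2 f3 m M2 M3 K"
    by unfold_locales
  then show ?thesis
    by blast
qed

theorem proposition1:
  fixes \<beta> A B :: real and f f1 f2 f3 :: "real \<Rightarrow> real"
  assumes "0 \<le> \<beta>" "\<beta> \<le> 1"
    and "C3_holder \<beta> A B f f1 f2 f3"
    and "\<forall>x\<in>{A..B}. f1 x > 0"
  shows "\<exists>C. \<forall>x1\<in>{A..B}. \<forall>x2\<in>{A..B}. \<forall>x3\<in>{A..B}. \<exists>R.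
           ratio_distortion f f1 x1 x2 x3
             = 1 + (x1 - x3) * (f2 x1 / (2 * f1 x1)
                 + 1/6 * schwarzian f1 f2 f3 x1 * (x2 + x3 - 2 * x1) + R)
           \<and> \<bar>R\<bar> \<le> C * (Max {x1, x2, x3} - Min {x1, x2, x3}) powr (1 + \<beta>)"
proof -
  obtain m M2 M3 K where "C3_holder_bounds A B \<beta> f f1 f2 f3 m M2 M3 K"
    using C3_holder_imp_bounds[OF assms] by blast
  then interpret C3_holder_bounds A B \<beta> f f1 f2 f3 m M2 M3 K .
  show ?thesis
    by (rule ratio_distortion_expansion)
qed

end
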